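(* Let $k$ be a field, $A=kQ_A/I_A$ a monomial algebra with vertices $e_1,\dots,e_n$, and $B=kQ_B/I_B$ the algebra obtained from $A$ by gluing the distinct non-isolated vertices $e_1$ and $e_n$, with quiver morphism $\varphi:Q_A\to Q_B$. Then: (1) $\varphi$ induces a surjective map $\widetilde\varphi:\mathcal B_A\to\mathcal B_B$, $p\mapsto p^*$, such that $\widetilde\varphi^{-1}(p^* )=\{p\}$ for $p^*\ne f_1$ and $\widetilde\varphi^{-1}(f_1)=\{e_1,e_n\}$. (2) For $p,q\in\mathcal B_A$, if $p\|q$ in $Q_A$ then $p^*\|q^*$ in $Q_B$. (3) $\widetilde\varphi$ induces $k$-linear maps $\psi_0:k((Q_A)_0\|\mathcal B_A)\to k((Q_B)_0\|\mathcal B_B)$, $\psi_1:k((Q_A)_1\|\mathcal B_A)\to k((Q_B)_1\|\mathcal B_B)$, $\psi_2:k(Z_A\|\mathcal B_A)\to k(Z_B\|\mathcal B_B)$, each given by $x\|y\mapsto x^*\|y^*$.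
   Context: Monomial algebra: $A=kQ_A/I_A$, $Q_A$ finite quiver, $I_A$ admissible ideal generated by a minimal set $Z_A$ of paths of length $\ge2$; $\mathcal B_A$ is the set of paths of $Q_A$ (including the trivial paths $e_i$) not containing any element of $Z_A$ as a subpath, a basis of $A$. Gluing: $B$ is the subalgebra of $A$ generated by $f_1=e_1+e_n$, $f_i=e_i$ ($2\le i\le n-1$) and all arrows; $B\cong kQ_B/I_B$, where $Q_B$ has vertices $f_1,\dots,f_{n-1}$ and arrows $\alpha^*$ for the arrows $\alpha$ of $Q_A$ with endpoints given by $\varphi$; $\varphi(e_i)=f_i$ ($2\le i\le n-1$), $\varphi(e_1)=\varphi(e_n)=f_1$, $\varphi(\alpha)=\alpha^*$; for a path $p=a_m\cdots a_1$, $p^*=a_m^*\cdots a_1^*$. $I_B$ is generated by $Z_B=\{r^*:r\in Z_A\}\cup\{b^*c^*:b,c\text{ arrows of }Q_A,\ t(c),s(b)\in\{e_1,e_n\},\ t(c)\neq s(b)\}$, and $\mathcal B_B$ is the set of paths of $Q_B$ avoiding $Z_B$. $p\|q$ means $p,q$ have the same source and the same target; for path sets $X,Y$, $k(X\|Y)$ is the vector space with basis the pairs $x\|y$ of parallel paths $x\in X,y\in Y$. *)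

theory Defs
  imports Main
begin

text \<open>A path is a pair (v, [a1,...,am]) : starting vertex v and
the arrows in the order they are traversed (a1 first). The trivial path e_v is (v, []).\<close>

type_synonym 'a qpath = "nat \<times> 'a list"

definition is_path :: "nat set \<Rightarrow> 'a set \<Rightarrow> ('a \<Rightarrow> nat) \<Rightarrow> ('a \<Rightarrow> nat) \<Rightarrow> 'a qpath \<Rightarrow> bool" where
  "is_path V Ar s t p \<longleftrightarrow> fst p \<in> V \<and> set (snd p) \<subseteq> Ar \<and>
     (snd p \<noteq> [] \<longrightarrow> s (hd (snd p)) = fst p) \<and>
     (\<forall>i. Suc i < length (snd p) \<longrightarrow> t (snd p ! i) = s (snd p ! Suc i))"

definition ptgt :: "('a \<Rightarrow> nat) \<Rightarrow> 'a qpath \<Rightarrow> nat" where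
  "ptgt t p = (if snd p = [] then fst p else t (last (snd p)))"

definition vertex_at :: "('a \<Rightarrow> nat) \<Rightarrow> 'a qpath \<Rightarrow> nat \<Rightarrow> nat" where
  "vertex_at t p i = (if i = 0 then fst p else t (snd p ! (i - 1)))"

definition subpath :: "('a \<Rightarrow> nat) \<Rightarrow> 'a qpath \<Rightarrow> 'a qpath \<Rightarrow> bool" where
  "subpath t q p \<longleftrightarrow> (\<exists>u w. snd p = u @ snd q @ w \<and> fst q = vertex_at t p (length u))"

definition avoids :: "('a \<Rightarrow> nat) \<Rightarrow> 'a qpath set \<Rightarrow> 'a qpath \<Rightarrow> bool" where
  "avoids t Z p \<longleftrightarrow> \<not> (\<exists>r\<in>Z. subpath t r p)"

definition basis_paths :: "nat set \<Rightarrow> 'a set \<Rightarrow> ('a \<Rightarrow> nat) \<Rightarrow> ('a \<Rightarrow> nat) \<Rightarrow> 'a qpath set \<Rightarrow> 'a qpath set" where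
  "basis_paths V Ar s t Z = {p. is_path V Ar s t p \<and> avoids t Z p}"

definition parallel :: "('a \<Rightarrow> nat) \<Rightarrow> 'a qpath \<Rightarrow> 'a qpath \<Rightarrow> bool" where
  "parallel t p q \<longleftrightarrow> fst p = fst q \<and> ptgt t p = ptgt t q"

text \<open>Monomial algebra data: finite quiver with vertices 1..n, Z a minimal set of paths of
length \<ge> 2 generating an admissible ideal (admissibility: all sufficiently long paths
contain an element of Z).\<close>
definition monomial_data :: "nat \<Rightarrow> 'a set \<Rightarrow> ('a \<Rightarrow> nat) \<Rightarrow> ('a \<Rightarrow> nat) \<Rightarrow> 'a qpath set \<Rightarrow> bool" where
  "monomial_data n Ar s t Z \<longleftrightarrow>
     finite Ar \<and> (\<forall>a\<in>Ar. s a \<in> {1..n} \<and> t a \<in> {1..n}) \<and>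
     finite Z \<and> (\<forall>r\<in>Z. is_path {1..n} Ar s t r \<and> length (snd r) \<ge> 2) \<and>
     (\<forall>r\<in>Z. \<forall>r'\<in>Z. subpath t r r' \<longrightarrow> r = r') \<and>
     (\<exists>N. \<forall>p. is_path {1..n} Ar s t p \<and> length (snd p) \<ge> N \<longrightarrow> \<not> avoids t Z p)"

text \<open>Gluing e_1 and e_n: vertex map \<phi> (f_1 = 1, f_i = i for 2 \<le> i \<le> n-1); arrows keep
their names (\<alpha>* is identified with \<alpha>).\<close>
definition glue_v :: "nat \<Rightarrow> nat \<Rightarrow> nat" where
  "glue_v n i = (if i = n then 1 else i)"

definition star :: "nat \<Rightarrow> 'a qpath \<Rightarrow> 'a qpath" where
  "star n p = (glue_v n (fst p), snd p)"

definition ZB :: "nat \<Rightarrow> 'a set \<Rightarrow> ('a \<Rightarrow> nat) \<Rightarrow> ('a \<Rightarrow> nat) \<Rightarrow> 'a qpath set \<Rightarrow> 'a qpath set" where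
  "ZB n Ar s t Z = star n ` Z \<union>
     {(glue_v n (s c), [c, b]) | b c. b \<in> Ar \<and> c \<in> Ar \<and> t c \<in> {1, n} \<and> s b \<in> {1, n} \<and> t c \<noteq> s b}"

definition Q0 :: "nat set \<Rightarrow> 'a qpath set" where
  "Q0 V = {(i, []) | i. i \<in> V}"

definition Q1 :: "'a set \<Rightarrow> ('a \<Rightarrow> nat) \<Rightarrow> 'a qpath set" where
  "Q1 Ar s = {(s a, [a]) | a. a \<in> Ar}"

text \<open>k(X || Y): finitely supported k-valued functions on the parallel pairs (x,y),
x \<in> X, y \<in> Y (the pair x||y is the indicator of (x,y)).\<close>
definition kpar :: "('a \<Rightarrow> nat) \<Rightarrow> 'a qpath set \<Rightarrow> 'a qpath set \<Rightarrow> ('a qpath \<times> 'a qpath \<Rightarrow> 'k::field) set" where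
  "kpar t X Y = {f. finite {z. f z \<noteq> 0} \<and>
      (\<forall>z. f z \<noteq> 0 \<longrightarrow> fst z \<in> X \<and> snd z \<in> Y \<and> parallel t (fst z) (snd z))}"

definition basis_vec :: "'a qpath \<Rightarrow> 'a qpath \<Rightarrow> ('a qpath \<times> 'a qpath \<Rightarrow> 'k::field)" where
  "basis_vec x y = (\<lambda>z. if z = (x, y) then 1 else 0)"

text \<open>the linear extension of x||y \<mapsto> x*||y*\<close>
definition psi :: "nat \<Rightarrow> ('a qpath \<times> 'a qpath \<Rightarrow> 'k::field) \<Rightarrow> ('a qpath \<times> 'a qpath \<Rightarrow> 'k)" where
  "psi n f = (\<lambda>w. \<Sum>z\<in>{z. f z \<noteq> 0 \<and> (star n (fst z), star n (snd z)) = w}. f z)"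

definition psi_ok :: "nat \<Rightarrow> ('a \<Rightarrow> nat) \<Rightarrow> 'a qpath set \<Rightarrow> 'a qpath set \<Rightarrow> 'a qpath set \<Rightarrow> 'a qpath set
     \<Rightarrow> ('a qpath \<times> 'a qpath \<Rightarrow> 'k::field) set \<Rightarrow> ('a qpath \<times> 'a qpath \<Rightarrow> 'k) set \<Rightarrow> bool" where
  "psi_ok n t XA YA XB YB SA SB \<longleftrightarrow>
     (\<forall>f\<in>SA. psi n f \<in> SB) \<and>
     (\<forall>f\<in>SA. \<forall>g\<in>SA. psi n (\<lambda>z. f z + g z) = (\<lambda>w. psi n f w + psi n g w)) \<and>
     (\<forall>c. \<forall>f\<in>SA. psi n (\<lambda>z. c * f z) = (\<lambda>w. c * psi n f w)) \<and>
     (\<forall>x\<in>XA. \<forall>y\<in>YA. parallel t x y \<longrightarrow>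
        basis_vec x y \<in> SA \<and> psi n (basis_vec x y :: 'a qpath \<times> 'a qpath \<Rightarrow> 'k) = basis_vec (star n x) (star n y))"

end

theory Submission
  imports Defs
begin

text \<open>A nontrivial path is determined by its arrows, since its starting vertex is the source
of its first arrow; so gluing e_1 and e_n only identifies the two trivial paths e_1 and e_n.
A glued path avoids the new relations b*c* exactly when its consecutive arrows already compose
in Q_A, and a subpath r* of p* with r a nontrivial relation lifts to a subpath r of p.
Hence p \<mapsto> p* maps the basis of A onto the basis of B. It preserves parallelism because it
keeps arrows and only glues vertices, and the maps psi_i are the linear extensions of the
induced maps on parallel pairs.\<close>

lemma glue_v_eq_iff: "glue_v n i = glue_v n j \<longleftrightarrow> i = j \<or> i \<in> {1, n} \<and> j \<in> {1, n}"
  by (auto simp: glue_v_def)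

lemma vertex_at_path:
  assumes "is_path V Ar s t p" "i < length (snd p)"
  shows "vertex_at t p i = s (snd p ! i)"
  using assms by (cases i; cases "snd p") (auto simp: is_path_def vertex_at_def)

lemma vertex_at_star: "vertex_at (glue_v n \<circ> t) (star n p) i = glue_v n (vertex_at t p i)"
  by (simp add: vertex_at_def star_def)

lemma is_path_arrows_compose:
  assumes "is_path V Ar s t p" "snd p = u @ [c, b] @ w"
  shows "t c = s b"
proof -
  have "Suc (length u) < length (snd p)" using assms(2) by simp
  then have "t (snd p ! length u) = s (snd p ! Suc (length u))"
    using assms(1) by (simp add: is_path_def)
  then show ?thesis using assms(2) by (simp add: nth_append)
qed

lemma subpath_consecutive_arrows:
  assumes "is_path V Ar s t p" "Suc i < length (snd p)"
  shows "subpath t (s (snd p ! i), [snd p ! i, snd p ! Suc i]) p"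
proof -
  have "snd p = take i (snd p) @ [snd p ! i, snd p ! Suc i] @ drop (Suc (Suc i)) (snd p)"
    using assms(2) by (simp add: Cons_nth_drop_Suc)
  moreover have "vertex_at t p (length (take i (snd p))) = s (snd p ! i)"
    using assms vertex_at_path[OF assms(1)] by simp
  ultimately show ?thesis unfolding subpath_def by (metis fst_conv snd_conv)
qed

lemma subpath_star: "subpath t r p \<Longrightarrow> subpath (glue_v n \<circ> t) (star n r) (star n p)"
  unfolding subpath_def by (auto simp: vertex_at_star) (auto simp: star_def)

lemma subpath_of_subpath_star:
  assumes "is_path V Ar s t p" "is_path V' Ar s t r" "snd r \<noteq> []"
    and "subpath (glue_v n \<circ> t) (star n r) (star n p)"
  shows "subpath t r p"
proof -
  obtain u w where uw: "snd p = u @ snd r @ w"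
    using assms(4) by (auto simp: subpath_def star_def)
  obtain a rest where ar: "snd r = a # rest" using assms(3) by (cases "snd r") auto
  have "vertex_at t p (length u) = s a"
    using vertex_at_path[OF assms(1), of "length u"] uw ar by simp
  also have "s a = fst r" using assms(2) ar by (simp add: is_path_def)
  finally show ?thesis unfolding subpath_def using uw by auto
qed

lemma parallel_star: "parallel t p q \<Longrightarrow> parallel (glue_v n \<circ> t) (star n p) (star n q)"
  by (auto simp: parallel_def star_def ptgt_def)

lemma star_inj_nontrivial:
  assumes "is_path V Ar s t p" "is_path V' Ar s t q"
    and "star n q = star n p" "star n p \<noteq> (1, [])"
  shows "q = p"
proof -
  have arrows: "snd q = snd p" and glued: "glue_v n (fst q) = glue_v n (fst p)"
    using assms(3) by (auto simp: star_def)
  have "fst q = fst p"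
  proof (cases "snd p")
    case Nil
    then have "glue_v n (fst p) \<noteq> 1" using assms(4) by (auto simp: star_def)
    then show ?thesis using glued by (auto simp: glue_v_def split: if_splits)
  next
    case Cons
    then show ?thesis using assms(1,2) arrows by (auto simp: is_path_def)
  qed
  then show ?thesis using arrows by (simp add: prod_eq_iff)
qed

lemma star_eq_f1_iff: "star n q = (1, []) \<longleftrightarrow> q = (1, []) \<or> q = (n, [])"
proof
  assume "star n q = (1, [])"
  then have "snd q = []" "glue_v n (fst q) = 1" by (simp_all add: star_def prod_eq_iff)
  then show "q = (1, []) \<or> q = (n, [])" by (cases q) (auto simp: glue_v_def split: if_splits)
qed (auto simp: star_def glue_v_def)

lemma trivial_path_in_basis_paths:
  assumes "i \<in> V" "\<forall>r\<in>Z. snd r \<noteq> []"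
  shows "(i, []) \<in> basis_paths V Ar s t Z"
  using assms by (auto simp: basis_paths_def is_path_def avoids_def subpath_def)

lemma star_fibre_f1:
  assumes "n \<ge> 1" "\<forall>r\<in>Z. snd r \<noteq> []"
  shows "{q \<in> basis_paths {1..n} Ar s t Z. star n q = (1, [])} = {(1, []), (n, [])}"
proof -
  have "(1, []) \<in> basis_paths {1..n} Ar s t Z" "(n, []) \<in> basis_paths {1..n} Ar s t Z"
    using assms by (simp_all add: trivial_path_in_basis_paths)
  then show ?thesis unfolding star_eq_f1_iff by blast
qed

lemma is_path_star:
  assumes "n \<ge> 2" "is_path {1..n} Ar s t p"
  shows "is_path {1..n-1} Ar (glue_v n \<circ> s) (glue_v n \<circ> t) (star n p)"
  using assms unfolding is_path_def star_def by (auto simp: glue_v_def)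

lemma avoids_ZB_star:
  assumes Z: "\<forall>r\<in>Z. is_path V' Ar s t r \<and> snd r \<noteq> []"
    and p: "is_path V Ar s t p" "avoids t Z p"
  shows "avoids (glue_v n \<circ> t) (ZB n Ar s t Z) (star n p)"
  unfolding avoids_def
proof
  assume "\<exists>r\<in>ZB n Ar s t Z. subpath (glue_v n \<circ> t) r (star n p)"
  then obtain r where r: "r \<in> ZB n Ar s t Z" and sub: "subpath (glue_v n \<circ> t) r (star n p)"
    by blast
  show False
  proof (cases "r \<in> star n ` Z")
    case True
    then obtain r0 where "r0 \<in> Z" "r = star n r0" by blast
    then have "subpath t r0 p"
      using subpath_of_subpath_star[OF p(1)] Z sub by fastforce
    then show False using p(2) \<open>r0 \<in> Z\<close> by (auto simp: avoids_def)
  next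
    case False
    then obtain b c where "r = (glue_v n (s c), [c, b])" "t c \<noteq> s b"
      using r unfolding ZB_def by blast
    then show False
      using sub is_path_arrows_compose[OF p(1)] by (auto simp: subpath_def star_def)
  qed
qed

lemma star_basis_paths:
  assumes "n \<ge> 2" "\<forall>r\<in>Z. is_path V' Ar s t r \<and> snd r \<noteq> []"
    and "p \<in> basis_paths {1..n} Ar s t Z"
  shows "star n p \<in> basis_paths {1..n-1} Ar (glue_v n \<circ> s) (glue_v n \<circ> t) (ZB n Ar s t Z)"
  using assms(3) is_path_star[OF assms(1)] avoids_ZB_star[OF assms(2)]
  unfolding basis_paths_def by blast

lemma avoids_of_avoids_star:
  assumes "avoids (glue_v n \<circ> t) (ZB n Ar s t Z) (star n p)"
  shows "avoids t Z p"
  using assms subpath_star[of t _ p n] by (auto simp: avoids_def ZB_def)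

definition lift_path :: "('a \<Rightarrow> nat) \<Rightarrow> 'a qpath \<Rightarrow> 'a qpath" where
  "lift_path s q = (if snd q = [] then fst q else s (hd (snd q)), snd q)"

lemma star_lift_path:
  assumes "is_path {1..n-1} Ar (glue_v n \<circ> s) (glue_v n \<circ> t) q"
  shows "star n (lift_path s q) = q"
  using assms by (cases "snd q") (auto simp: lift_path_def star_def glue_v_def is_path_def prod_eq_iff)

lemma is_path_lift_path:
  assumes Ar: "\<forall>a\<in>Ar. s a \<in> {1..n} \<and> t a \<in> {1..n}"
    and q: "is_path {1..n-1} Ar (glue_v n \<circ> s) (glue_v n \<circ> t) q"
      "avoids (glue_v n \<circ> t) (ZB n Ar s t Z) q"
  shows "is_path {1..n} Ar s t (lift_path s q)"
proof -
  have "t (snd q ! i) = s (snd q ! Suc i)" if i: "Suc i < length (snd q)" for i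
  proof (rule ccontr)
    assume ne: "t (snd q ! i) \<noteq> s (snd q ! Suc i)"
    let ?c = "snd q ! i" and ?b = "snd q ! Suc i"
    have arrows: "?c \<in> Ar" "?b \<in> Ar" using q(1) i by (auto simp: is_path_def)
    have "glue_v n (t ?c) = glue_v n (s ?b)" using q(1) i by (simp add: is_path_def)
    then have "t ?c \<in> {1, n} \<and> s ?b \<in> {1, n}" using ne by (simp add: glue_v_eq_iff)
    then have "(glue_v n (s ?c), [?c, ?b]) \<in> ZB n Ar s t Z"
      unfolding ZB_def using arrows ne by blast
    moreover have "subpath (glue_v n \<circ> t) (glue_v n (s ?c), [?c, ?b]) q"
      using subpath_consecutive_arrows[OF q(1) i] by simp
    ultimately show False using q(2) by (auto simp: avoids_def)
  qed
  moreover have "fst (lift_path s q) \<in> {1..n}"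
    using q(1) Ar by (cases "snd q") (auto simp: lift_path_def is_path_def)
  ultimately show ?thesis using q(1) by (auto simp: lift_path_def is_path_def)
qed

lemma star_image_basis_paths:
  assumes "n \<ge> 2" "\<forall>a\<in>Ar. s a \<in> {1..n} \<and> t a \<in> {1..n}"
    and "\<forall>r\<in>Z. is_path {1..n} Ar s t r \<and> snd r \<noteq> []"
  shows "star n ` basis_paths {1..n} Ar s t Z
    = basis_paths {1..n-1} Ar (glue_v n \<circ> s) (glue_v n \<circ> t) (ZB n Ar s t Z)"
proof
  show "star n ` basis_paths {1..n} Ar s t Z
    \<subseteq> basis_paths {1..n-1} Ar (glue_v n \<circ> s) (glue_v n \<circ> t) (ZB n Ar s t Z)"
    using star_basis_paths[OF assms(1,3)] by blast
next
  show "basis_paths {1..n-1} Ar (glue_v n \<circ> s) (glue_v n \<circ> t) (ZB n Ar s t Z)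
    \<subseteq> star n ` basis_paths {1..n} Ar s t Z"
  proof
    fix q
    assume "q \<in> basis_paths {1..n-1} Ar (glue_v n \<circ> s) (glue_v n \<circ> t) (ZB n Ar s t Z)"
    then have q: "is_path {1..n-1} Ar (glue_v n \<circ> s) (glue_v n \<circ> t) q"
      "avoids (glue_v n \<circ> t) (ZB n Ar s t Z) q"
      by (auto simp: basis_paths_def)
    then have "lift_path s q \<in> basis_paths {1..n} Ar s t Z"
      using is_path_lift_path[OF assms(2) q] avoids_of_avoids_star[of n t Ar s Z "lift_path s q"]
      unfolding basis_paths_def star_lift_path[OF q(1)] by blast
    then show "q \<in> star n ` basis_paths {1..n} Ar s t Z"
      using star_lift_path[OF q(1)] by force
  qed
qed

lemma kpar_finite_support: "f \<in> kpar t X Y \<Longrightarrow> finite {z. f z \<noteq> 0}"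
  by (simp add: kpar_def)

lemma kpar_support:
  "f \<in> kpar t X Y \<Longrightarrow> f z \<noteq> 0 \<Longrightarrow> fst z \<in> X \<and> snd z \<in> Y \<and> parallel t (fst z) (snd z)"
  unfolding kpar_def by blast

lemma psi_support:
  "{w. psi n f w \<noteq> 0} \<subseteq> (\<lambda>z. (star n (fst z), star n (snd z))) ` {z. f z \<noteq> 0}"
proof
  fix w
  assume w: "w \<in> {w. psi n f w \<noteq> 0}"
  show "w \<in> (\<lambda>z. (star n (fst z), star n (snd z))) ` {z. f z \<noteq> 0}"
  proof (rule ccontr)
    assume "w \<notin> (\<lambda>z. (star n (fst z), star n (snd z))) ` {z. f z \<noteq> 0}"
    then have "{z. f z \<noteq> 0 \<and> (star n (fst z), star n (snd z)) = w} = {}" by blast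
    then have "psi n f w = 0" unfolding psi_def by (simp only: sum.empty)
    then show False using w by simp
  qed
qed

lemma psi_in_kpar:
  assumes "star n ` XA \<subseteq> XB" "star n ` YA \<subseteq> YB" "f \<in> kpar t XA YA"
  shows "psi n f \<in> kpar (glue_v n \<circ> t) XB YB"
proof -
  have "finite {w. psi n f w \<noteq> 0}"
    using finite_surj[OF kpar_finite_support[OF assms(3)] psi_support] .
  moreover have "fst w \<in> XB \<and> snd w \<in> YB \<and> parallel (glue_v n \<circ> t) (fst w) (snd w)"
    if "psi n f w \<noteq> 0" for w
  proof -
    obtain z where z: "f z \<noteq> 0" "w = (star n (fst z), star n (snd z))"
      using psi_support \<open>psi n f w \<noteq> 0\<close> by blast
    have "fst z \<in> XA" "snd z \<in> YA" "parallel t (fst z) (snd z)"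
      using kpar_support[OF assms(3) z(1)] by simp_all
    then show ?thesis using assms(1,2) z(2) by (simp add: image_subset_iff parallel_star)
  qed
  ultimately show ?thesis unfolding kpar_def by blast
qed

lemma psi_add:
  assumes "finite {z. f z \<noteq> 0}" "finite {z. g z \<noteq> 0}"
  shows "psi n (\<lambda>z. f z + g z) = (\<lambda>w. psi n f w + psi n g w)"
proof
  fix w
  let ?S = "{z. (f z \<noteq> 0 \<or> g z \<noteq> 0) \<and> (star n (fst z), star n (snd z)) = w}"
  have "finite ?S" using assms by (auto intro: finite_subset[of _ "{z. f z \<noteq> 0} \<union> {z. g z \<noteq> 0}"])
  then have "psi n (\<lambda>z. f z + g z) w = (\<Sum>z\<in>?S. f z + g z)"
    "psi n f w = (\<Sum>z\<in>?S. f z)" "psi n g w = (\<Sum>z\<in>?S. g z)"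
    unfolding psi_def by (auto intro: sum.mono_neutral_left)
  then show "psi n (\<lambda>z. f z + g z) w = psi n f w + psi n g w" by (simp add: sum.distrib)
qed

lemma psi_scale: "psi n (\<lambda>z. c * f z) = (\<lambda>w. c * psi n f w)"
  by (cases "c = 0") (simp_all add: psi_def sum_distrib_left)

lemma basis_vec_in_kpar:
  "x \<in> X \<Longrightarrow> y \<in> Y \<Longrightarrow> parallel t x y \<Longrightarrow> basis_vec x y \<in> kpar t X Y"
  by (simp add: kpar_def basis_vec_def)

lemma psi_basis_vec:
  "psi n (basis_vec x y :: 'a qpath \<times> 'a qpath \<Rightarrow> 'k::field) = basis_vec (star n x) (star n y)"
proof
  fix w
  have "{z. (basis_vec x y z :: 'k) \<noteq> 0 \<and> (star n (fst z), star n (snd z)) = w} =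
      (if (star n x, star n y) = w then {(x, y)} else {})"
    by (auto simp: basis_vec_def)
  then show "psi n (basis_vec x y) w = (basis_vec (star n x) (star n y) w :: 'k)"
    by (auto simp: psi_def basis_vec_def)
qed

lemma psi_ok_star:
  assumes "star n ` XA \<subseteq> XB" "star n ` YA \<subseteq> YB"
  shows "psi_ok n t XA YA XB YB
    (kpar t XA YA :: ('a qpath \<times> 'a qpath \<Rightarrow> 'k::field) set) (kpar (glue_v n \<circ> t) XB YB)"
  unfolding psi_ok_def
proof (intro conjI ballI allI impI)
  fix f g :: "'a qpath \<times> 'a qpath \<Rightarrow> 'k"
  assume f: "f \<in> kpar t XA YA"
  then show "psi n f \<in> kpar (glue_v n \<circ> t) XB YB" by (rule psi_in_kpar[OF assms])
  assume "g \<in> kpar t XA YA"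
  then show "psi n (\<lambda>z. f z + g z) = (\<lambda>w. psi n f w + psi n g w)"
    using f by (simp add: psi_add kpar_finite_support)
qed (simp_all add: psi_scale basis_vec_in_kpar psi_basis_vec)

theorem proposition3p3:
  fixes n :: nat and Ar :: "'a set" and s t :: "'a \<Rightarrow> nat" and Z :: "'a qpath set"
  assumes mono: "monomial_data n Ar s t Z"
    and distinct: "n \<ge> 2"
    and nonisol1: "\<exists>a\<in>Ar. s a = 1 \<or> t a = 1"
    and nonisoln: "\<exists>a\<in>Ar. s a = n \<or> t a = n"
  defines "BA \<equiv> basis_paths {1..n} Ar s t Z"
    and "BB \<equiv> basis_paths {1..n-1} Ar (glue_v n \<circ> s) (glue_v n \<circ> t) (ZB n Ar s t Z)"
    and "tB \<equiv> glue_v n \<circ> t"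
  shows
    "(\<forall>p\<in>BA. star n p \<in> BB) \<and> star n ` BA = BB \<and>
     (\<forall>p\<in>BA. star n p \<noteq> (1, []) \<longrightarrow> {q\<in>BA. star n q = star n p} = {p}) \<and>
     {q\<in>BA. star n q = (1, [])} = {(1, []), (n, [])} \<and>
     (\<forall>p\<in>BA. \<forall>q\<in>BA. parallel t p q \<longrightarrow> parallel tB (star n p) (star n q)) \<and>
     psi_ok n t (Q0 {1..n}) BA (Q0 {1..n-1}) BB
        (kpar t (Q0 {1..n}) BA :: ('a qpath \<times> 'a qpath \<Rightarrow> 'k::field) set) (kpar tB (Q0 {1..n-1}) BB) \<and>
     psi_ok n t (Q1 Ar s) BA (Q1 Ar (glue_v n \<circ> s)) BB
        (kpar t (Q1 Ar s) BA :: ('a qpath \<times> 'a qpath \<Rightarrow> 'k::field) set) (kpar tB (Q1 Ar (glue_v n \<circ> s)) BB) \<and>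
     psi_ok n t Z BA (ZB n Ar s t Z) BB
        (kpar t Z BA :: ('a qpath \<times> 'a qpath \<Rightarrow> 'k::field) set) (kpar tB (ZB n Ar s t Z) BB)"
proof -
  have Ar: "\<forall>a\<in>Ar. s a \<in> {1..n} \<and> t a \<in> {1..n}"
    using mono by (simp add: monomial_data_def)
  have Z: "\<forall>r\<in>Z. is_path {1..n} Ar s t r \<and> snd r \<noteq> []"
    using mono by (fastforce simp: monomial_data_def)
  have image: "star n ` BA = BB"
    unfolding BA_def BB_def using star_image_basis_paths[OF distinct Ar Z] .
  have fibres: "\<forall>p\<in>BA. star n p \<noteq> (1, []) \<longrightarrow> {q\<in>BA. star n q = star n p} = {p}"
    using star_inj_nontrivial unfolding BA_def basis_paths_def by blast
  have "n \<ge> 1" "\<forall>r\<in>Z. snd r \<noteq> []" using distinct Z by auto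
  then have fibre_f1: "{q\<in>BA. star n q = (1, [])} = {(1, []), (n, [])}"
    unfolding BA_def by (rule star_fibre_f1)
  have parallel: "\<forall>p\<in>BA. \<forall>q\<in>BA. parallel t p q \<longrightarrow> parallel tB (star n p) (star n q)"
    unfolding tB_def using parallel_star by blast
  have "star n ` Q0 {1..n} \<subseteq> Q0 {1..n-1}"
    using distinct by (auto simp: Q0_def star_def glue_v_def)
  moreover have "star n ` Q1 Ar s \<subseteq> Q1 Ar (glue_v n \<circ> s)" by (auto simp: Q1_def star_def)
  moreover have "star n ` Z \<subseteq> ZB n Ar s t Z" by (auto simp: ZB_def)
  moreover have "\<forall>p\<in>BA. star n p \<in> BB" using image by blast
  ultimately show ?thesis
    unfolding tB_def using equalityD1[OF image]
    by (intro conjI image fibres fibre_f1 parallel[unfolded tB_def] psi_ok_star)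
qed

end
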